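(* Let $\mathcal P$ be a conventional logic program. Then: (1) if $v$ is a three-valued stable model of $\mathcal P$, then $v$ is a pessimistic fixed model of $\mathcal P$, i.e. $\Psi'^{\mathcal F}_{\mathcal P}(v)=v$; (2) if $v$ is the well-founded semantics of $\mathcal P$, then $v=Fix^{\mathcal F}_{\mathcal U}$; (3) if $v$ is the Kripke-Kleene semantics of $\mathcal P$, then $v=Fix^{\mathcal U}_{\mathcal U}$.
   Context: $\mathcal{FOUR}=\{\mathcal F,\mathcal T,\mathcal U,\mathcal I\}$ is Belnap's bilattice: truth order $\mathcal F\le_t\mathcal U\le_t\mathcal T$, $\mathcal F\le_t\mathcal I\le_t\mathcal T$; knowledge order $\mathcal U\le_k\mathcal F\le_k\mathcal I$, $\mathcal U\le_k\mathcal T\le_k\mathcal I$; $\wedge,\vee$ are meet/join for $\le_t$, $\otimes,\oplus$ for $\le_k$ (with infinitary versions $\bigwedge,\bigvee,\bigotimes,\bigoplus$); negation $\neg\mathcal T=\mathcal F$, $\neg\mathcal F=\mathcal T$, $\neg\mathcal U=\mathcal U$, $\neg\mathcal I=\mathcal I$. A Fitting program over $\mathcal{FOUR}$: formulas are built from literals ($A$ or $\neg A$) and elements of $\mathcal{FOUR}$ using $\wedge,\vee,\otimes,\oplus,\exists,\forall$ (with built-in predicate $equal$); a clause is $P(x_1,\dots,x_n)\leftarrow\phi(x_1,\dots,x_n)$ with the body's free variables among $x_1,\dots,x_n$; a program is a finite set of clauses with no predicate letter heading more than one clause; Inst-$\mathcal P$ is its set of ground instances. A conventional logic program is such a program that does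 not involve $\otimes,\oplus,\forall,\mathcal U,\mathcal I$. Valuations are maps from ground atoms to $\mathcal{FOUR}$, ordered pointwise; they extend to closed formulas compositionally ($v(\beta)=\beta$, $v(\neg A)=\neg v(A)$, connectives pointwise, $\exists$ as $\bigvee$, $\forall$ as $\bigwedge$ over closed-term instances, $v(equal(s,t))=\mathcal T$ if $s=t$ else $\mathcal F$). The contrajoin $v\bigtriangleup w$ evaluates likewise but gives $A$ the value $v(A)$ and $\neg A$ the value $\neg w(A)$. For $\alpha\in\mathcal{FOUR}$: $\Psi_{\mathcal P}^{\alpha}(v,w)(A)=\alpha$ if $A$ heads no member of Inst-$\mathcal P$, and $=(v\bigtriangleup w)(B)$ if $A\leftarrow B\in$ Inst-$\mathcal P$. $\Psi'^{\mathcal F}_{\mathcal P}(v)$ is the $\le_t$-least fixpoint of $x\mapsto\Psi^{\mathcal F}_{\mathcal P}(x,v)$ and $\Psi'^{\mathcal U}_{\mathcal P}(v)$ is the $\le_k$-least fixpoint of $x\mapsto\Psi^{\mathcal U}_{\mathcal P}(x,v)$. A pessimistic fixed model is a fixpoint of $\Psi'^{\mathcal F}_{\mathcal P}$. $Fix^{\alpha}_{\mathcal U}$ is the $\le_k$-least fixpoint of $\Psi'^{\alpha}_{\mathcal P}$. Three-valued stable models (Przymusinski): for a valuation $v$ with values in $\{\mathcal F,\mathcal U,\mathcal T\}$, let $\mathcal P_{/v}$ be obtained from Inst-$\mathcal P$ by replacing each negative literal $\neg A$ in bodies by the value $\neg v(A)$; let $\Phi_{\mathcal P_{/v}}(u)(A)=\mathcal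 F$ if $A$ heads no rule of $\mathcal P_{/v}$, $\mathcal T$ if $A\leftarrow$ (empty body) is in $\mathcal P_{/v}$, and otherwise the join over rules $A\leftarrow B$ of $\mathcal P_{/v}$ of $u(B)$; $GL_{\mathcal P}(v)$ is the $\le_t$-least fixpoint of $\Phi_{\mathcal P_{/v}}$. $v$ is a three-valued stable model if $GL_{\mathcal P}(v)=v$; the well-founded semantics is the least three-valued stable model. Kripke-Kleene semantics (as defined in the paper): $\Phi_{\mathcal P}(v)(A)=\mathcal T$ if some rule of Inst-$\mathcal P$ with head $A$ has body value $\mathcal T$ under $v$; $=\mathcal F$ if there is a rule with head $A$ and every rule with head $A$ has body value $\mathcal F$ under $v$; $=\mathcal U$ otherwise. The Kripke-Kleene semantics is the $\le_k$-least fixpoint of $\Phi_{\mathcal P}$. *)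

theory Defs
  imports Main
begin

section \<open>Belnap's bilattice FOUR\<close>

datatype four = FF | TT | UU | II

definition le_t :: "four \<Rightarrow> four \<Rightarrow> bool" where
  "le_t x y \<longleftrightarrow> x = y \<or> x = FF \<or> y = TT"

definition le_k :: "four \<Rightarrow> four \<Rightarrow> bool" where
  "le_k x y \<longleftrightarrow> x = y \<or> x = UU \<or> y = II"

text \<open>Standard product representation: a value carries evidence for truth and for falsity.\<close>
definition tr :: "four \<Rightarrow> bool" where "tr x \<longleftrightarrow> x = TT \<or> x = II"
definition fa :: "four \<Rightarrow> bool" where "fa x \<longleftrightarrow> x = FF \<or> x = II"
definition mk :: "bool \<Rightarrow> bool \<Rightarrow> four" where
  "mk t f = (if t then (if f then II else TT) else (if f then FF else UU))"

definition neg4 :: "four \<Rightarrow> four" where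
  "neg4 x = (case x of TT \<Rightarrow> FF | FF \<Rightarrow> TT | UU \<Rightarrow> UU | II \<Rightarrow> II)"

definition BigAnd :: "four set \<Rightarrow> four" where
  "BigAnd S = mk (\<forall>x\<in>S. tr x) (\<exists>x\<in>S. fa x)"
definition BigOr :: "four set \<Rightarrow> four" where
  "BigOr S = mk (\<exists>x\<in>S. tr x) (\<forall>x\<in>S. fa x)"
definition BigOtimes :: "four set \<Rightarrow> four" where
  "BigOtimes S = mk (\<forall>x\<in>S. tr x) (\<forall>x\<in>S. fa x)"
definition BigOplus :: "four set \<Rightarrow> four" where
  "BigOplus S = mk (\<exists>x\<in>S. tr x) (\<exists>x\<in>S. fa x)"

definition and4 :: "four \<Rightarrow> four \<Rightarrow> four" where "and4 x y = BigAnd {x, y}"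
definition or4 :: "four \<Rightarrow> four \<Rightarrow> four" where "or4 x y = BigOr {x, y}"
definition otimes4 :: "four \<Rightarrow> four \<Rightarrow> four" where "otimes4 x y = BigOtimes {x, y}"
definition oplus4 :: "four \<Rightarrow> four \<Rightarrow> four" where "oplus4 x y = BigOplus {x, y}"

datatype 'f trm = Var nat | Fn 'f "'f trm list"

datatype 'f gtrm = GFn 'f "'f gtrm list"

fun teval :: "(nat \<Rightarrow> 'f gtrm) \<Rightarrow> 'f trm \<Rightarrow> 'f gtrm" where
  "teval \<sigma> (Var x) = \<sigma> x"
| "teval \<sigma> (Fn f ts) = GFn f (map (teval \<sigma>) ts)"

fun tvars :: "'f trm \<Rightarrow> nat set" where
  "tvars (Var x) = {x}"
| "tvars (Fn f ts) = \<Union> (set (map tvars ts))"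

text \<open>Formulas: literals (with polarity: True = positive, False = negated), the built-in
  equality literal, constants of FOUR, the four binary connectives, and quantifiers.\<close>
datatype ('p, 'f) fm =
    Lit bool 'p "'f trm list"
  | Eq bool "'f trm" "'f trm"
  | Cst four
  | And "('p,'f) fm" "('p,'f) fm"
  | Or "('p,'f) fm" "('p,'f) fm"
  | Otimes "('p,'f) fm" "('p,'f) fm"
  | Oplus "('p,'f) fm" "('p,'f) fm"
  | Ex nat "('p,'f) fm"
  | All nat "('p,'f) fm"

fun fv :: "('p,'f) fm \<Rightarrow> nat set" where
  "fv (Lit b p ts) = \<Union> (set (map tvars ts))"
| "fv (Eq b s t) = tvars s \<union> tvars t"
| "fv (Cst c) = {}"
| "fv (And a b) = fv a \<union> fv b"
| "fv (Or a b) = fv a \<union> fv b"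
| "fv (Otimes a b) = fv a \<union> fv b"
| "fv (Oplus a b) = fv a \<union> fv b"
| "fv (Ex x a) = fv a - {x}"
| "fv (All x a) = fv a - {x}"

fun conventional_fm :: "('p,'f) fm \<Rightarrow> bool" where
  "conventional_fm (Lit b p ts) = True"
| "conventional_fm (Eq b s t) = True"
| "conventional_fm (Cst c) = (c = FF \<or> c = TT)"
| "conventional_fm (And a b) = (conventional_fm a \<and> conventional_fm b)"
| "conventional_fm (Or a b) = (conventional_fm a \<and> conventional_fm b)"
| "conventional_fm (Otimes a b) = False"
| "conventional_fm (Oplus a b) = False"
| "conventional_fm (Ex x a) = conventional_fm a"
| "conventional_fm (All x a) = False"

text \<open>A clause P(x1,...,xn) <- phi is a triple (P, [x1,...,xn], phi).\<close>
type_synonym ('p, 'f) clause = "'p \<times> nat list \<times> ('p,'f) fm"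
type_synonym ('p, 'f) program = "('p,'f) clause set"

definition fitting_program :: "('p,'f) program \<Rightarrow> bool" where
  "fitting_program P \<longleftrightarrow> finite P
     \<and> (\<forall>(p, xs, \<phi>) \<in> P. distinct xs \<and> fv \<phi> \<subseteq> set xs)
     \<and> (\<forall>c1\<in>P. \<forall>c2\<in>P. fst c1 = fst c2 \<longrightarrow> c1 = c2)"

definition conventional_program :: "('p,'f) program \<Rightarrow> bool" where
  "conventional_program P \<longleftrightarrow> fitting_program P \<and> (\<forall>(p, xs, \<phi>) \<in> P. conventional_fm \<phi>)"

type_synonym ('p, 'f) gatom = "'p \<times> 'f gtrm list"
type_synonym ('p, 'f) valuation = "('p,'f) gatom \<Rightarrow> four"

text \<open>Ground instances: the instance of clause (p, xs, phi) under a grounding substitution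
  sigma is the rule with head (p, map sigma xs) and closed body phi sigma, represented by
  the pair (phi, sigma).\<close>
definition inst :: "('p,'f) program \<Rightarrow> (('p,'f) gatom \<times> ('p,'f) fm \<times> (nat \<Rightarrow> 'f gtrm)) set" where
  "inst P = {(A, \<phi>, \<sigma>). \<exists>p xs. (p, xs, \<phi>) \<in> P \<and> A = (p, map \<sigma> xs)}"

text \<open>Evaluation of the closed formula phi sigma, where positive ground literals A get
  value pos A and negative ground literals get value neg A.\<close>
fun evalg :: "('p,'f) valuation \<Rightarrow> ('p,'f) valuation \<Rightarrow> (nat \<Rightarrow> 'f gtrm) \<Rightarrow> ('p,'f) fm \<Rightarrow> four" where
  "evalg pos neg \<sigma> (Lit b p ts) =
     (if b then pos (p, map (teval \<sigma>) ts) else neg (p, map (teval \<sigma>) ts))"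
| "evalg pos neg \<sigma> (Eq b s t) =
     (let e = (if teval \<sigma> s = teval \<sigma> t then TT else FF) in if b then e else neg4 e)"
| "evalg pos neg \<sigma> (Cst c) = c"
| "evalg pos neg \<sigma> (And a b) = and4 (evalg pos neg \<sigma> a) (evalg pos neg \<sigma> b)"
| "evalg pos neg \<sigma> (Or a b) = or4 (evalg pos neg \<sigma> a) (evalg pos neg \<sigma> b)"
| "evalg pos neg \<sigma> (Otimes a b) = otimes4 (evalg pos neg \<sigma> a) (evalg pos neg \<sigma> b)"
| "evalg pos neg \<sigma> (Oplus a b) = oplus4 (evalg pos neg \<sigma> a) (evalg pos neg \<sigma> b)"
| "evalg pos neg \<sigma> (Ex x a) = BigOr {evalg pos neg (\<sigma>(x := t)) a | t. True}"
| "evalg pos neg \<sigma> (All x a) = BigAnd {evalg pos neg (\<sigma>(x := t)) a | t. True}"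

definition val :: "('p,'f) valuation \<Rightarrow> (nat \<Rightarrow> 'f gtrm) \<Rightarrow> ('p,'f) fm \<Rightarrow> four" where
  "val v = evalg v (\<lambda>A. neg4 (v A))"

definition contrajoin :: "('p,'f) valuation \<Rightarrow> ('p,'f) valuation \<Rightarrow> (nat \<Rightarrow> 'f gtrm) \<Rightarrow> ('p,'f) fm \<Rightarrow> four" where
  "contrajoin v w = evalg v (\<lambda>A. neg4 (w A))"

definition le_tv :: "('p,'f) valuation \<Rightarrow> ('p,'f) valuation \<Rightarrow> bool" where
  "le_tv v w \<longleftrightarrow> (\<forall>A. le_t (v A) (w A))"

definition le_kv :: "('p,'f) valuation \<Rightarrow> ('p,'f) valuation \<Rightarrow> bool" where
  "le_kv v w \<longleftrightarrow> (\<forall>A. le_k (v A) (w A))"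

definition is_least_fp :: "('a \<Rightarrow> 'a \<Rightarrow> bool) \<Rightarrow> ('a \<Rightarrow> 'a) \<Rightarrow> 'a \<Rightarrow> bool" where
  "is_least_fp le f x \<longleftrightarrow> f x = x \<and> (\<forall>y. f y = y \<longrightarrow> le x y)"

definition least_fp :: "('a \<Rightarrow> 'a \<Rightarrow> bool) \<Rightarrow> ('a \<Rightarrow> 'a) \<Rightarrow> 'a" where
  "least_fp le f = (THE x. is_least_fp le f x)"

definition Psi :: "('p,'f) program \<Rightarrow> four \<Rightarrow> ('p,'f) valuation \<Rightarrow> ('p,'f) valuation \<Rightarrow> ('p,'f) valuation" where
  "Psi P \<alpha> v w A =
     (if \<exists>\<phi> \<sigma>. (A, \<phi>, \<sigma>) \<in> inst P
      then (THE b. \<exists>\<phi> \<sigma>. (A, \<phi>, \<sigma>) \<in> inst P \<and> b = contrajoin v w \<sigma> \<phi>)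
      else \<alpha>)"

definition PsiF' :: "('p,'f) program \<Rightarrow> ('p,'f) valuation \<Rightarrow> ('p,'f) valuation" where
  "PsiF' P v = least_fp le_tv (\<lambda>x. Psi P FF x v)"

definition PsiU' :: "('p,'f) program \<Rightarrow> ('p,'f) valuation \<Rightarrow> ('p,'f) valuation" where
  "PsiU' P v = least_fp le_kv (\<lambda>x. Psi P UU x v)"

definition pessimistic_fixed_model :: "('p,'f) program \<Rightarrow> ('p,'f) valuation \<Rightarrow> bool" where
  "pessimistic_fixed_model P v \<longleftrightarrow> PsiF' P v = v"

definition FixFU :: "('p,'f) program \<Rightarrow> ('p,'f) valuation" where
  "FixFU P = least_fp le_kv (PsiF' P)"

definition FixUU :: "('p,'f) program \<Rightarrow> ('p,'f) valuation" where
  "FixUU P = least_fp le_kv (PsiU' P)"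

definition three_valued :: "('p,'f) valuation \<Rightarrow> bool" where
  "three_valued v \<longleftrightarrow> (\<forall>A. v A \<noteq> II)"

text \<open>Phi of the reduct P/v applied to u: each negative literal "not A" of a ground body
  is replaced by the constant neg (v A), and the remaining (positive) literals are
  evaluated by u.\<close>
definition Phi_red :: "('p,'f) program \<Rightarrow> ('p,'f) valuation \<Rightarrow> ('p,'f) valuation \<Rightarrow> ('p,'f) valuation" where
  "Phi_red P v u A =
     (if \<exists>\<phi> \<sigma>. (A, \<phi>, \<sigma>) \<in> inst P
      then BigOr {evalg u (\<lambda>B. neg4 (v B)) \<sigma> \<phi> | \<phi> \<sigma>. (A, \<phi>, \<sigma>) \<in> inst P}
      else FF)"

definition GL :: "('p,'f) program \<Rightarrow> ('p,'f) valuation \<Rightarrow> ('p,'f) valuation" where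
  "GL P v = least_fp le_tv (Phi_red P v)"

definition stable3 :: "('p,'f) program \<Rightarrow> ('p,'f) valuation \<Rightarrow> bool" where
  "stable3 P v \<longleftrightarrow> three_valued v \<and> GL P v = v"

definition well_founded_sem :: "('p,'f) program \<Rightarrow> ('p,'f) valuation \<Rightarrow> bool" where
  "well_founded_sem P v \<longleftrightarrow> stable3 P v \<and> (\<forall>w. stable3 P w \<longrightarrow> le_kv v w)"

definition Phi_KK :: "('p,'f) program \<Rightarrow> ('p,'f) valuation \<Rightarrow> ('p,'f) valuation" where
  "Phi_KK P v A =
     (if \<exists>\<phi> \<sigma>. (A, \<phi>, \<sigma>) \<in> inst P \<and> val v \<sigma> \<phi> = TT then TT
      else if (\<exists>\<phi> \<sigma>. (A, \<phi>, \<sigma>) \<in> inst P) \<and> (\<forall>\<phi> \<sigma>. (A, \<phi>, \<sigma>) \<in> inst P \<longrightarrow> val v \<sigma> \<phi> = FF) then FF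
      else UU)"

definition kripke_kleene_sem :: "('p,'f) program \<Rightarrow> ('p,'f) valuation \<Rightarrow> bool" where
  "kripke_kleene_sem P v \<longleftrightarrow> is_least_fp le_kv (Phi_KK P) v"

end

theory Submission
  imports Defs
begin

text \<open>
  A value of FOUR is a pair of truth and falsity evidence (\<open>tr\<close>, \<open>fa\<close>). Both orders are then
  products of the boolean order (with the falsity component reversed for \<open>le_t\<close>), so valuations
  form complete lattices for both, and every connective is monotone in each evidence component
  separately, negative literals swapping the components.

  If no predicate heads two clauses, the reduct operator of \<open>P/v\<close> is exactly \<open>x \<mapsto> Psi\<^sup>F(x, v)\<close>,
  so the Gelfond-Lifschitz operator is \<open>Psi'\<^sup>F\<close> and three-valued stable models are the
  three-valued pessimistic fixed models. The truth evidence of the truth-least fixpoint of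
  \<open>Psi\<^sup>F(-, v)\<close> grows with the falsity evidence of \<open>v\<close> and vice versa, so \<open>Psi'\<^sup>F\<close> is
  knowledge-monotone. Its knowledge-least fixpoint lies below the well-founded model, hence is
  three-valued, hence stable, hence equal to it.

  Conventional bodies evaluate consistently on three-valued valuations, where Fitting's operator
  therefore coincides with the diagonal \<open>x \<mapsto> Psi\<^sup>U(x, x)\<close>; and the least fixpoint of
  \<open>w \<mapsto> lfp (Psi\<^sup>U(-, w))\<close> is always the least fixpoint of that diagonal.
\<close>

section \<open>Evidence pairs\<close>

lemma tr_mk [simp]: "tr (mk a b) = a" by (simp add: tr_def mk_def)
lemma fa_mk [simp]: "fa (mk a b) = b" by (simp add: fa_def mk_def)
lemma mk_tr_fa [simp]: "mk (tr x) (fa x) = x"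
  by (cases x) (simp_all add: tr_def fa_def mk_def)
lemma four_eqI: "tr x = tr y \<Longrightarrow> fa x = fa y \<Longrightarrow> x = y"
  by (cases x; cases y) (simp_all add: tr_def fa_def)
lemma tr_neg4 [simp]: "tr (neg4 x) = fa x" by (cases x) (simp_all add: tr_def fa_def neg4_def)
lemma fa_neg4 [simp]: "fa (neg4 x) = tr x" by (cases x) (simp_all add: tr_def fa_def neg4_def)
lemma tr_simps [simp]: "tr TT" "\<not> tr FF" "\<not> tr UU" "tr II" by (simp_all add: tr_def)
lemma fa_simps [simp]: "\<not> fa TT" "fa FF" "\<not> fa UU" "fa II" by (simp_all add: fa_def)
lemma eq_II_iff: "x = II \<longleftrightarrow> tr x \<and> fa x" by (cases x) (simp_all add: tr_def fa_def)

lemma tr_BigAnd [simp]: "tr (BigAnd S) = (\<forall>x\<in>S. tr x)" by (simp add: BigAnd_def)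
lemma fa_BigAnd [simp]: "fa (BigAnd S) = (\<exists>x\<in>S. fa x)" by (simp add: BigAnd_def)
lemma tr_BigOr [simp]: "tr (BigOr S) = (\<exists>x\<in>S. tr x)" by (simp add: BigOr_def)
lemma fa_BigOr [simp]: "fa (BigOr S) = (\<forall>x\<in>S. fa x)" by (simp add: BigOr_def)
lemma tr_BigOtimes [simp]: "tr (BigOtimes S) = (\<forall>x\<in>S. tr x)" by (simp add: BigOtimes_def)
lemma fa_BigOtimes [simp]: "fa (BigOtimes S) = (\<forall>x\<in>S. fa x)" by (simp add: BigOtimes_def)
lemma tr_BigOplus [simp]: "tr (BigOplus S) = (\<exists>x\<in>S. tr x)" by (simp add: BigOplus_def)
lemma fa_BigOplus [simp]: "fa (BigOplus S) = (\<exists>x\<in>S. fa x)" by (simp add: BigOplus_def)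

lemma le_t_iff: "le_t x y \<longleftrightarrow> (tr x \<longrightarrow> tr y) \<and> (fa y \<longrightarrow> fa x)"
  by (cases x; cases y) (simp_all add: le_t_def tr_def fa_def)
lemma le_k_iff: "le_k x y \<longleftrightarrow> (tr x \<longrightarrow> tr y) \<and> (fa x \<longrightarrow> fa y)"
  by (cases x; cases y) (simp_all add: le_k_def tr_def fa_def)

lemma le_tv_iff: "le_tv v w \<longleftrightarrow> (\<forall>A. (tr (v A) \<longrightarrow> tr (w A)) \<and> (fa (w A) \<longrightarrow> fa (v A)))"
  by (simp add: le_tv_def le_t_iff)
lemma le_kv_iff: "le_kv v w \<longleftrightarrow> (\<forall>A. (tr (v A) \<longrightarrow> tr (w A)) \<and> (fa (v A) \<longrightarrow> fa (w A)))"
  by (simp add: le_kv_def le_k_iff)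

lemma le_tvD:
  "le_tv v w \<Longrightarrow> tr (v A) \<Longrightarrow> tr (w A)" "le_tv v w \<Longrightarrow> fa (w A) \<Longrightarrow> fa (v A)"
  unfolding le_tv_iff by blast+
lemma le_kvD:
  "le_kv v w \<Longrightarrow> tr (v A) \<Longrightarrow> tr (w A)" "le_kv v w \<Longrightarrow> fa (v A) \<Longrightarrow> fa (w A)"
  unfolding le_kv_iff by blast+

lemma partial_order_le_tv: "reflp le_tv" "transp le_tv" "antisymp le_tv"
  by (auto simp: reflp_def transp_def antisymp_def le_tv_iff fun_eq_iff intro: four_eqI)
lemma partial_order_le_kv: "reflp le_kv" "transp le_kv" "antisymp le_kv"
  by (auto simp: reflp_def transp_def antisymp_def le_kv_iff fun_eq_iff intro: four_eqI)

section \<open>Least fixpoints\<close>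

definition least_prefixpoint :: "('a \<Rightarrow> 'a \<Rightarrow> bool) \<Rightarrow> ('a \<Rightarrow> 'a) \<Rightarrow> 'a \<Rightarrow> bool" where
  "least_prefixpoint le f m \<longleftrightarrow> f m = m \<and> (\<forall>y. le (f y) y \<longrightarrow> le m y)"

lemma least_prefixpoint_least_fp:
  assumes "least_prefixpoint le f m" "reflp le" "antisymp le"
  shows "least_fp le f = m"
  unfolding least_fp_def
proof (rule the_equality)
  show "is_least_fp le f m"
    using assms by (auto simp: least_prefixpoint_def is_least_fp_def reflpD)
  show "x = m" if "is_least_fp le f x" for x
    using that assms by (auto simp: least_prefixpoint_def is_least_fp_def reflpD antisympD)
qed

theorem knaster_tarski_glb:
  fixes le :: "'a \<Rightarrow> 'a \<Rightarrow> bool" and glb :: "'a set \<Rightarrow> 'a"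
  assumes "transp le" and "antisymp le"
    and mono: "\<And>x y. le x y \<Longrightarrow> le (f x) (f y)"
    and glb_lower: "\<And>S y. y \<in> S \<Longrightarrow> le (glb S) y"
    and glb_greatest: "\<And>S z. (\<And>y. y \<in> S \<Longrightarrow> le z y) \<Longrightarrow> le z (glb S)"
  shows "least_prefixpoint le f (glb {y. le (f y) y})"
proof -
  let ?m = "glb {y. le (f y) y}"
  have below: "le ?m y" if "le (f y) y" for y
    using that by (intro glb_lower) simp
  have "le (f ?m) y" if "le (f y) y" for y
    using mono[OF below[OF that]] that \<open>transp le\<close> by (blast dest: transpD)
  then have pre: "le (f ?m) ?m"
    by (intro glb_greatest) simp
  then have "le ?m (f ?m)"
    using mono by (intro below) blast
  with pre have "f ?m = ?m"
    using \<open>antisymp le\<close> by (blast dest: antisympD)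
  with below show ?thesis
    by (simp add: least_prefixpoint_def)
qed

corollary least_fp_is_least_prefixpoint:
  fixes le :: "'a \<Rightarrow> 'a \<Rightarrow> bool" and glb :: "'a set \<Rightarrow> 'a"
  assumes "reflp le" "transp le" "antisymp le"
    and "\<And>x y. le x y \<Longrightarrow> le (f x) (f y)"
    and "\<And>S y. y \<in> S \<Longrightarrow> le (glb S) y"
    and "\<And>S z. (\<And>y. y \<in> S \<Longrightarrow> le z y) \<Longrightarrow> le z (glb S)"
  shows "least_prefixpoint le f (least_fp le f)"
proof -
  have "least_prefixpoint le f (glb {y. le (f y) y})"
    using assms(2-) by (rule knaster_tarski_glb)
  moreover from this assms(1,3) have "least_fp le f = glb {y. le (f y) y}"
    by (rule least_prefixpoint_least_fp)
  ultimately show ?thesis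
    by simp
qed

lemma least_fp_tv_is_least_prefixpoint:
  assumes "\<And>x y. le_tv x y \<Longrightarrow> le_tv (f x) (f y)"
  shows "least_prefixpoint le_tv f (least_fp le_tv f)"
proof (rule least_fp_is_least_prefixpoint[where glb = "\<lambda>S A. BigAnd ((\<lambda>v. v A) ` S)"])
  show "\<And>S y. y \<in> S \<Longrightarrow> le_tv (\<lambda>A. BigAnd ((\<lambda>v. v A) ` S)) y"
    "\<And>S z. (\<And>y. y \<in> S \<Longrightarrow> le_tv z y) \<Longrightarrow> le_tv z (\<lambda>A. BigAnd ((\<lambda>v. v A) ` S))"
    by (auto simp: le_tv_iff)
qed (use partial_order_le_tv assms in auto)

lemma least_fp_kv_is_least_prefixpoint:
  assumes "\<And>x y. le_kv x y \<Longrightarrow> le_kv (f x) (f y)"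
  shows "least_prefixpoint le_kv f (least_fp le_kv f)"
proof (rule least_fp_is_least_prefixpoint[where glb = "\<lambda>S A. BigOtimes ((\<lambda>v. v A) ` S)"])
  show "\<And>S y. y \<in> S \<Longrightarrow> le_kv (\<lambda>A. BigOtimes ((\<lambda>v. v A) ` S)) y"
    "\<And>S z. (\<And>y. y \<in> S \<Longrightarrow> le_kv z y) \<Longrightarrow> le_kv z (\<lambda>A. BigOtimes ((\<lambda>v. v A) ` S))"
    by (auto simp: le_kv_iff)
qed (use partial_order_le_kv assms in auto)

lemma least_prefixpoint_eq_least_fixpoint_within:
  assumes "least_prefixpoint le f m" and "reflp le" and "antisymp le"
    and down_closed: "\<And>x y. le x y \<Longrightarrow> S y \<Longrightarrow> S x"
    and "S v" and "f v = v" and least: "\<And>x. S x \<Longrightarrow> f x = x \<Longrightarrow> le v x"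
  shows "v = m"
proof -
  have "le m v"
    using assms(1,2,6) by (simp add: least_prefixpoint_def reflpD)
  then have "S m"
    using down_closed \<open>S v\<close> by blast
  then have "le v m"
    using least assms(1) by (simp add: least_prefixpoint_def)
  from \<open>antisymp le\<close> this \<open>le m v\<close> show ?thesis
    by (rule antisympD)
qed

lemma least_prefixpoint_diagonal:
  assumes "reflp le" and "antisymp le"
    and G: "\<And>w. least_prefixpoint le (\<lambda>x. F x w) (G w)"
    and m: "least_prefixpoint le G m" and k: "least_prefixpoint le (\<lambda>x. F x x) k"
  shows "m = k"
proof -
  have "F k k = k"
    using k by (simp add: least_prefixpoint_def)
  then have "le (G k) k"
    using G[of k] \<open>reflp le\<close> by (simp add: least_prefixpoint_def reflpD)
  then have "le m k"
    using m by (simp add: least_prefixpoint_def)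
  have "F m m = m"
    using G[of m] m by (simp add: least_prefixpoint_def)
  then have "le k m"
    using k \<open>reflp le\<close> by (simp add: least_prefixpoint_def reflpD)
  with \<open>antisymp le\<close> \<open>le m k\<close> show ?thesis
    by (rule antisympD)
qed

section \<open>Evaluation of formulas\<close>

lemma teval_cong: "(\<And>x. x \<in> tvars t \<Longrightarrow> \<sigma> x = \<sigma>' x) \<Longrightarrow> teval \<sigma> t = teval \<sigma>' t"
  by (induction t) auto

lemma evalg_cong: "(\<And>x. x \<in> fv \<phi> \<Longrightarrow> \<sigma> x = \<sigma>' x) \<Longrightarrow> evalg p n \<sigma> \<phi> = evalg p n \<sigma>' \<phi>"
proof (induction \<phi> arbitrary: \<sigma> \<sigma>')
  case (Lit b q ts)
  then have "map (teval \<sigma>) ts = map (teval \<sigma>') ts"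
    by (auto intro!: teval_cong)
  then show ?case by (simp del: map_eq_conv)
next
  case (Eq b s t)
  then show ?case by (simp add: teval_cong[of s \<sigma> \<sigma>'] teval_cong[of t \<sigma> \<sigma>'])
next
  case (Ex x \<phi>)
  have "evalg p n (\<sigma>(x := t)) \<phi> = evalg p n (\<sigma>'(x := t)) \<phi>" for t
    by (rule Ex.IH) (use Ex.prems in auto)
  then show ?case by simp
next
  case (All x \<phi>)
  have "evalg p n (\<sigma>(x := t)) \<phi> = evalg p n (\<sigma>'(x := t)) \<phi>" for t
    by (rule All.IH) (use All.prems in auto)
  then show ?case by simp
next
  case (And a b)
  show ?case using And.prems by (simp add: And.IH[of \<sigma> \<sigma>'])
next
  case (Or a b)
  show ?case using Or.prems by (simp add: Or.IH[of \<sigma> \<sigma>'])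
next
  case (Otimes a b)
  show ?case using Otimes.prems by (simp add: Otimes.IH[of \<sigma> \<sigma>'])
next
  case (Oplus a b)
  show ?case using Oplus.prems by (simp add: Oplus.IH[of \<sigma> \<sigma>'])
qed simp

lemma evalg_tr_mono:
  "(\<And>A. tr (p A) \<Longrightarrow> tr (p' A)) \<Longrightarrow> (\<And>A. tr (n A) \<Longrightarrow> tr (n' A)) \<Longrightarrow>
   tr (evalg p n \<sigma> \<phi>) \<Longrightarrow> tr (evalg p' n' \<sigma> \<phi>)"
  by (induction \<phi> arbitrary: \<sigma>) (fastforce simp: and4_def or4_def otimes4_def oplus4_def Let_def)+

lemma evalg_fa_mono:
  "(\<And>A. fa (p A) \<Longrightarrow> fa (p' A)) \<Longrightarrow> (\<And>A. fa (n A) \<Longrightarrow> fa (n' A)) \<Longrightarrow>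
   fa (evalg p n \<sigma> \<phi>) \<Longrightarrow> fa (evalg p' n' \<sigma> \<phi>)"
  by (induction \<phi> arbitrary: \<sigma>) (fastforce simp: and4_def or4_def otimes4_def oplus4_def Let_def)+

text \<open>Without conventionality this fails: \<open>All\<close> and \<open>Oplus\<close> combine \<open>TT\<close> and \<open>FF\<close> into \<open>II\<close>.\<close>

lemma evalg_conventional_neq_II:
  assumes "conventional_fm \<phi>" and "\<And>A. p A \<noteq> II" and "\<And>A. n A \<noteq> II"
  shows "evalg p n \<sigma> \<phi> \<noteq> II"
  using assms(1)
proof (induction \<phi> arbitrary: \<sigma>)
  case (Lit b q ts)
  show ?case using assms(2,3) by simp
next
  case (Eq b s t)
  show ?case by (simp add: Let_def neg4_def)
next
  case (And \<phi>1 \<phi>2)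
  then show ?case by (auto simp: and4_def eq_II_iff)
next
  case (Or \<phi>1 \<phi>2)
  then show ?case by (auto simp: or4_def eq_II_iff)
next
  case (Ex x \<phi>)
  show ?case
  proof
    assume "evalg p n \<sigma> (Ex x \<phi>) = II"
    then obtain t where "evalg p n (\<sigma>(x := t)) \<phi> = II"
      by (auto simp: eq_II_iff)
    with Ex show False by simp
  qed
qed auto

section \<open>The operators Psi\<close>

lemma evalg_inst_same_head:
  assumes fp: "fitting_program P"
    and "(A, \<phi>, \<sigma>) \<in> inst P" and "(A, \<phi>', \<sigma>') \<in> inst P"
  shows "evalg p n \<sigma>' \<phi>' = evalg p n \<sigma> \<phi>"
proof -
  obtain q xs where c: "(q, xs, \<phi>) \<in> P" "A = (q, map \<sigma> xs)"
    using assms(2) by (auto simp: inst_def)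
  obtain q' xs' where c': "(q', xs', \<phi>') \<in> P" "A = (q', map \<sigma>' xs')"
    using assms(3) by (auto simp: inst_def)
  have "\<forall>c1\<in>P. \<forall>c2\<in>P. fst c1 = fst c2 \<longrightarrow> c1 = c2"
    using fp by (simp add: fitting_program_def)
  from this[rule_format, OF c'(1) c(1)] have "(q', xs', \<phi>') = (q, xs, \<phi>)"
    using c(2) c'(2) by simp
  then have "\<phi>' = \<phi>" and "map \<sigma>' xs = map \<sigma> xs"
    using c(2) c'(2) by simp_all
  have "\<forall>(p, xs, \<phi>) \<in> P. distinct xs \<and> fv \<phi> \<subseteq> set xs"
    using fp by (simp add: fitting_program_def)
  from bspec[OF this c(1)] have "fv \<phi> \<subseteq> set xs"
    by simp
  with \<open>map \<sigma>' xs = map \<sigma> xs\<close> have "\<sigma>' x = \<sigma> x" if "x \<in> fv \<phi>" for x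
    using that by auto
  then show ?thesis
    unfolding \<open>\<phi>' = \<phi>\<close> by (rule evalg_cong)
qed

lemma Psi_inst_eq:
  assumes fp: "fitting_program P" and inst: "(A, \<phi>, \<sigma>) \<in> inst P"
  shows "Psi P \<alpha> v w A = contrajoin v w \<sigma> \<phi>"
proof -
  have "(THE b. \<exists>\<phi>' \<sigma>'. (A, \<phi>', \<sigma>') \<in> inst P \<and> b = contrajoin v w \<sigma>' \<phi>') = contrajoin v w \<sigma> \<phi>"
  proof (rule the_equality)
    show "\<exists>\<phi>' \<sigma>'. (A, \<phi>', \<sigma>') \<in> inst P \<and> contrajoin v w \<sigma> \<phi> = contrajoin v w \<sigma>' \<phi>'"
      using inst by blast
    fix b
    assume "\<exists>\<phi>' \<sigma>'. (A, \<phi>', \<sigma>') \<in> inst P \<and> b = contrajoin v w \<sigma>' \<phi>'"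
    then obtain \<phi>' \<sigma>' where "(A, \<phi>', \<sigma>') \<in> inst P" and b: "b = contrajoin v w \<sigma>' \<phi>'"
      by blast
    from fp inst this(1) have "contrajoin v w \<sigma>' \<phi>' = contrajoin v w \<sigma> \<phi>"
      unfolding contrajoin_def by (rule evalg_inst_same_head)
    with b show "b = contrajoin v w \<sigma> \<phi>"
      by simp
  qed
  moreover have "\<exists>\<phi> \<sigma>. (A, \<phi>, \<sigma>) \<in> inst P"
    using inst by blast
  ultimately show ?thesis
    by (simp add: Psi_def)
qed

lemma tr_Psi_mono:
  assumes fp: "fitting_program P" and "tr (Psi P \<alpha> x w A)"
    and "\<And>B. tr (x B) \<Longrightarrow> tr (x' B)" and "\<And>B. fa (w B) \<Longrightarrow> fa (w' B)"
  shows "tr (Psi P \<alpha> x' w' A)"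
proof (cases "\<exists>\<phi> \<sigma>. (A, \<phi>, \<sigma>) \<in> inst P")
  case True
  then obtain \<phi> \<sigma> where inst: "(A, \<phi>, \<sigma>) \<in> inst P" by blast
  have "tr (evalg x (\<lambda>B. neg4 (w B)) \<sigma> \<phi>)"
    using assms(2) by (simp add: Psi_inst_eq[OF fp inst] contrajoin_def)
  then have "tr (evalg x' (\<lambda>B. neg4 (w' B)) \<sigma> \<phi>)"
    by (rule evalg_tr_mono[rotated 2]) (simp_all add: assms(3,4))
  then show ?thesis
    by (simp add: Psi_inst_eq[OF fp inst] contrajoin_def)
qed (use assms(2) in \<open>simp add: Psi_def\<close>)

lemma fa_Psi_mono:
  assumes fp: "fitting_program P" and "fa (Psi P \<alpha> x w A)"
    and "\<And>B. fa (x B) \<Longrightarrow> fa (x' B)" and "\<And>B. tr (w B) \<Longrightarrow> tr (w' B)"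
  shows "fa (Psi P \<alpha> x' w' A)"
proof (cases "\<exists>\<phi> \<sigma>. (A, \<phi>, \<sigma>) \<in> inst P")
  case True
  then obtain \<phi> \<sigma> where inst: "(A, \<phi>, \<sigma>) \<in> inst P" by blast
  have "fa (evalg x (\<lambda>B. neg4 (w B)) \<sigma> \<phi>)"
    using assms(2) by (simp add: Psi_inst_eq[OF fp inst] contrajoin_def)
  then have "fa (evalg x' (\<lambda>B. neg4 (w' B)) \<sigma> \<phi>)"
    by (rule evalg_fa_mono[rotated 2]) (simp_all add: assms(3,4))
  then show ?thesis
    by (simp add: Psi_inst_eq[OF fp inst] contrajoin_def)
qed (use assms(2) in \<open>simp add: Psi_def\<close>)

lemma Psi_mono_kv:
  assumes fp: "fitting_program P" and "le_kv x x'" and "le_kv w w'"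
  shows "le_kv (Psi P \<alpha> x w) (Psi P \<alpha> x' w')"
  unfolding le_kv_iff
proof (intro allI conjI impI)
  fix A
  show "tr (Psi P \<alpha> x' w' A)" if "tr (Psi P \<alpha> x w A)"
    using that le_kvD(1)[OF assms(2)] le_kvD(2)[OF assms(3)] by (rule tr_Psi_mono[OF fp])
  show "fa (Psi P \<alpha> x' w' A)" if "fa (Psi P \<alpha> x w A)"
    using that le_kvD(2)[OF assms(2)] le_kvD(1)[OF assms(3)] by (rule fa_Psi_mono[OF fp])
qed

lemma Psi_mono_tv:
  assumes fp: "fitting_program P" and "le_tv x x'"
  shows "le_tv (Psi P \<alpha> x w) (Psi P \<alpha> x' w)"
  unfolding le_tv_iff
proof (intro allI conjI impI)
  fix A
  show "tr (Psi P \<alpha> x' w A)" if "tr (Psi P \<alpha> x w A)"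
    using that le_tvD(1)[OF assms(2)] by (rule tr_Psi_mono[OF fp])
  show "fa (Psi P \<alpha> x w A)" if "fa (Psi P \<alpha> x' w A)"
    using that le_tvD(2)[OF assms(2)] by (rule fa_Psi_mono[OF fp])
qed

lemma PsiF'_least_prefixpoint:
  assumes "fitting_program P"
  shows "least_prefixpoint le_tv (\<lambda>x. Psi P FF x w) (PsiF' P w)"
  unfolding PsiF'_def using Psi_mono_tv[OF assms] by (rule least_fp_tv_is_least_prefixpoint)

lemma PsiU'_least_prefixpoint:
  assumes "fitting_program P"
  shows "least_prefixpoint le_kv (\<lambda>x. Psi P UU x w) (PsiU' P w)"
  unfolding PsiU'_def
proof (rule least_fp_kv_is_least_prefixpoint)
  show "le_kv (Psi P UU x w) (Psi P UU y w)" if "le_kv x y" for x y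
    by (rule Psi_mono_kv[OF assms that]) (simp add: le_kv_iff)
qed

lemma PsiU'_mono_kv:
  assumes fp: "fitting_program P" and "le_kv w1 w2"
  shows "le_kv (PsiU' P w1) (PsiU' P w2)"
proof -
  let ?L2 = "PsiU' P w2"
  have "le_kv (Psi P UU ?L2 w1) (Psi P UU ?L2 w2)"
    by (rule Psi_mono_kv[OF fp _ assms(2)]) (simp add: le_kv_iff)
  also have "Psi P UU ?L2 w2 = ?L2"
    using PsiU'_least_prefixpoint[OF fp] by (simp add: least_prefixpoint_def)
  finally show ?thesis
    using PsiU'_least_prefixpoint[OF fp, of w1] by (simp add: least_prefixpoint_def)
qed

lemma tr_PsiF'_mono:
  assumes fp: "fitting_program P" and "tr (PsiF' P w1 A)" and w: "\<And>B. fa (w1 B) \<Longrightarrow> fa (w2 B)"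
  shows "tr (PsiF' P w2 A)"
proof -
  let ?L1 = "PsiF' P w1" and ?L2 = "PsiF' P w2"
  have L1: "least_prefixpoint le_tv (\<lambda>x. Psi P FF x w1) ?L1"
    and L2: "least_prefixpoint le_tv (\<lambda>x. Psi P FF x w2) ?L2"
    using PsiF'_least_prefixpoint[OF fp] by blast+
  \<comment> \<open>The truth evidence of \<open>Psi P FF x w\<close> depends only on that of \<open>x\<close> and on the
    falsity evidence of \<open>w\<close>, so cutting the truth evidence of \<open>?L1\<close> down to that of
    \<open>?L2\<close> gives a prefixpoint.\<close>
  define y where "y B = mk (tr (?L1 B) \<and> tr (?L2 B)) (fa (?L1 B))" for B
  have "le_tv (Psi P FF y w1) y"
    unfolding le_tv_iff
  proof (intro allI conjI impI)
    fix B
    assume "tr (Psi P FF y w1 B)"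
    then have "tr (Psi P FF ?L1 w1 B)" and "tr (Psi P FF ?L2 w2 B)"
      by (rule tr_Psi_mono[OF fp]; simp add: y_def w)+
    then show "tr (y B)"
      using L1 L2 by (simp add: y_def least_prefixpoint_def)
  next
    fix B
    assume "fa (y B)"
    then have "fa (Psi P FF ?L1 w1 B)"
      using L1 by (simp add: y_def least_prefixpoint_def)
    then show "fa (Psi P FF y w1 B)"
      by (rule fa_Psi_mono[OF fp]) (simp_all add: y_def)
  qed
  then have "le_tv ?L1 y"
    using L1 by (simp add: least_prefixpoint_def)
  from le_tvD(1)[OF this assms(2)] show ?thesis
    by (simp add: y_def)
qed

lemma fa_PsiF'_mono:
  assumes fp: "fitting_program P" and "fa (PsiF' P w1 A)" and w: "\<And>B. tr (w1 B) \<Longrightarrow> tr (w2 B)"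
  shows "fa (PsiF' P w2 A)"
proof -
  let ?L1 = "PsiF' P w1" and ?L2 = "PsiF' P w2"
  have L1: "least_prefixpoint le_tv (\<lambda>x. Psi P FF x w1) ?L1"
    and L2: "least_prefixpoint le_tv (\<lambda>x. Psi P FF x w2) ?L2"
    using PsiF'_least_prefixpoint[OF fp] by blast+
  define y where "y B = mk (tr (?L2 B)) (fa (?L1 B) \<or> fa (?L2 B))" for B
  have "le_tv (Psi P FF y w2) y"
    unfolding le_tv_iff
  proof (intro allI conjI impI)
    fix B
    assume "tr (Psi P FF y w2 B)"
    then have "tr (Psi P FF ?L2 w2 B)"
      by (rule tr_Psi_mono[OF fp]) (simp_all add: y_def)
    then show "tr (y B)"
      using L2 by (simp add: y_def least_prefixpoint_def)
  next
    fix B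
    assume "fa (y B)"
    then have "fa (Psi P FF ?L1 w1 B) \<or> fa (Psi P FF ?L2 w2 B)"
      using L1 L2 by (simp add: y_def least_prefixpoint_def)
    then show "fa (Psi P FF y w2 B)"
    proof
      assume "fa (Psi P FF ?L1 w1 B)"
      then show ?thesis
        by (rule fa_Psi_mono[OF fp]) (simp_all add: y_def w)
    next
      assume "fa (Psi P FF ?L2 w2 B)"
      then show ?thesis
        by (rule fa_Psi_mono[OF fp]) (simp_all add: y_def)
    qed
  qed
  then have "le_tv ?L2 y"
    using L2 by (simp add: least_prefixpoint_def)
  from le_tvD(2)[OF this, where A = A] show ?thesis
    using assms(2) by (simp add: y_def)
qed

lemma PsiF'_mono_kv:
  assumes fp: "fitting_program P" and "le_kv w1 w2"
  shows "le_kv (PsiF' P w1) (PsiF' P w2)"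
  unfolding le_kv_iff
proof (intro allI conjI impI)
  fix A
  show "tr (PsiF' P w2 A)" if "tr (PsiF' P w1 A)"
    using fp that le_kvD(2)[OF assms(2)] by (rule tr_PsiF'_mono)
  show "fa (PsiF' P w2 A)" if "fa (PsiF' P w1 A)"
    using fp that le_kvD(1)[OF assms(2)] by (rule fa_PsiF'_mono)
qed

section \<open>Stable, well-founded and Kripke-Kleene semantics\<close>

lemma GL_eq_PsiF':
  assumes fp: "fitting_program P"
  shows "GL P w = PsiF' P w"
proof -
  have "Phi_red P w = (\<lambda>u. Psi P FF u w)"
  proof (intro ext)
    fix u A
    show "Phi_red P w u A = Psi P FF u w A"
    proof (cases "\<exists>\<phi> \<sigma>. (A, \<phi>, \<sigma>) \<in> inst P")
      case True
      then obtain \<phi> \<sigma> where inst: "(A, \<phi>, \<sigma>) \<in> inst P" by blast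
      have "{evalg u (\<lambda>B. neg4 (w B)) \<sigma>' \<phi>' | \<phi>' \<sigma>'. (A, \<phi>', \<sigma>') \<in> inst P}
          = {evalg u (\<lambda>B. neg4 (w B)) \<sigma> \<phi>}"
        using inst evalg_inst_same_head[OF fp inst] by blast
      then show ?thesis
        using True by (simp add: Phi_red_def Psi_inst_eq[OF fp inst] contrajoin_def BigOr_def)
    qed (simp add: Phi_red_def Psi_def)
  qed
  then show ?thesis
    by (simp add: GL_def PsiF'_def)
qed

lemma stable3_iff:
  "fitting_program P \<Longrightarrow> stable3 P v \<longleftrightarrow> three_valued v \<and> pessimistic_fixed_model P v"
  by (simp add: stable3_def pessimistic_fixed_model_def GL_eq_PsiF')

lemma three_valuedD: "three_valued v \<Longrightarrow> v A \<noteq> II"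
  unfolding three_valued_def by blast

lemma three_valued_le_kv: "le_kv x y \<Longrightarrow> three_valued y \<Longrightarrow> three_valued x"
  by (auto simp: three_valued_def le_kv_iff eq_II_iff)

lemma three_valued_Phi_KK: "three_valued (Phi_KK P x)"
  by (simp add: three_valued_def Phi_KK_def)

lemma Phi_KK_eq_Psi:
  assumes cp: "conventional_program P" and "three_valued x"
  shows "Phi_KK P x = Psi P UU x x"
proof
  fix A
  have fp: "fitting_program P"
    using cp by (simp add: conventional_program_def)
  show "Phi_KK P x A = Psi P UU x x A"
  proof (cases "\<exists>\<phi> \<sigma>. (A, \<phi>, \<sigma>) \<in> inst P")
    case True
    then obtain \<phi> \<sigma> where inst: "(A, \<phi>, \<sigma>) \<in> inst P" by blast
    have same: "val x \<sigma>' \<phi>' = val x \<sigma> \<phi>" if "(A, \<phi>', \<sigma>') \<in> inst P" for \<phi>' \<sigma>'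
      unfolding val_def by (rule evalg_inst_same_head[OF fp inst that])
    obtain q xs where "(q, xs, \<phi>) \<in> P"
      using inst by (auto simp: inst_def)
    then have "conventional_fm \<phi>"
      using cp unfolding conventional_program_def by fast
    then have "val x \<sigma> \<phi> \<noteq> II"
      unfolding val_def
    proof (rule evalg_conventional_neq_II)
      show "x B \<noteq> II" and "neg4 (x B) \<noteq> II" for B
        using three_valuedD[OF \<open>three_valued x\<close>, of B] by (simp_all add: neg4_def split: four.split)
    qed
    have "Phi_KK P x A = (if val x \<sigma> \<phi> = TT then TT else if val x \<sigma> \<phi> = FF then FF else UU)"
      using inst by (auto simp: Phi_KK_def dest: same)
    also have "\<dots> = val x \<sigma> \<phi>"
      using \<open>val x \<sigma> \<phi> \<noteq> II\<close> by (cases "val x \<sigma> \<phi>") simp_all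
    also have "\<dots> = Psi P UU x x A"
      by (simp add: Psi_inst_eq[OF fp inst] contrajoin_def val_def)
    finally show ?thesis .
  qed (simp add: Phi_KK_def Psi_def)
qed

lemma well_founded_sem_eq_FixFU:
  fixes P :: "('p, 'f) program"
  assumes fp: "fitting_program P" and wf: "well_founded_sem P v"
  shows "v = FixFU P"
proof -
  have lp: "least_prefixpoint le_kv (PsiF' P) (FixFU P)"
    unfolding FixFU_def using PsiF'_mono_kv[OF fp] by (rule least_fp_kv_is_least_prefixpoint)
  show ?thesis
  proof (rule least_prefixpoint_eq_least_fixpoint_within[OF lp partial_order_le_kv(1,3)])
    show "three_valued x" if "le_kv x y" and "three_valued y" for x y :: "('p, 'f) valuation"
      using that by (rule three_valued_le_kv)
    show "three_valued v" and "PsiF' P v = v"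
      using wf by (simp_all add: well_founded_sem_def stable3_iff[OF fp] pessimistic_fixed_model_def)
    show "le_kv v x" if "three_valued x" and "PsiF' P x = x" for x
      using wf that by (simp add: well_founded_sem_def stable3_iff[OF fp] pessimistic_fixed_model_def)
  qed
qed

lemma kripke_kleene_sem_eq_FixUU:
  fixes P :: "('p, 'f) program"
  assumes cp: "conventional_program P" and kk: "kripke_kleene_sem P v"
  shows "v = FixUU P"
proof -
  have fp: "fitting_program P"
    using cp by (simp add: conventional_program_def)
  let ?D = "\<lambda>x. Psi P UU x x"
  have diag: "least_prefixpoint le_kv ?D (least_fp le_kv ?D)"
    using Psi_mono_kv[OF fp] by (rule least_fp_kv_is_least_prefixpoint)
  have "least_prefixpoint le_kv (PsiU' P) (FixUU P)"
    unfolding FixUU_def using PsiU'_mono_kv[OF fp] by (rule least_fp_kv_is_least_prefixpoint)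
  with partial_order_le_kv(1,3) PsiU'_least_prefixpoint[OF fp]
  have "FixUU P = least_fp le_kv ?D"
    using diag by (rule least_prefixpoint_diagonal)
  have "v = least_fp le_kv ?D"
  proof (rule least_prefixpoint_eq_least_fixpoint_within[OF diag partial_order_le_kv(1,3)])
    show "three_valued x" if "le_kv x y" and "three_valued y" for x y :: "('p, 'f) valuation"
      using that by (rule three_valued_le_kv)
    have "Phi_KK P v = v"
      using kk by (simp add: kripke_kleene_sem_def is_least_fp_def)
    then show "three_valued v"
      using three_valued_Phi_KK[of P v] by simp
    with \<open>Phi_KK P v = v\<close> show "?D v = v"
      by (simp add: Phi_KK_eq_Psi[OF cp])
    show "le_kv v x" if "three_valued x" and "?D x = x" for x
      using kk that by (simp add: kripke_kleene_sem_def is_least_fp_def Phi_KK_eq_Psi[OF cp])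
  qed
  with \<open>FixUU P = least_fp le_kv ?D\<close> show ?thesis
    by simp
qed

theorem theorem4:
  fixes P :: "('p, 'f) program"
  assumes "conventional_program P"
  shows "(\<forall>v. stable3 P v \<longrightarrow> pessimistic_fixed_model P v)
       \<and> (\<forall>v. well_founded_sem P v \<longrightarrow> v = FixFU P)
       \<and> (\<forall>v. kripke_kleene_sem P v \<longrightarrow> v = FixUU P)"
proof -
  have fp: "fitting_program P"
    using assms by (simp add: conventional_program_def)
  show ?thesis
    using stable3_iff[OF fp] well_founded_sem_eq_FixFU[OF fp] kripke_kleene_sem_eq_FixUU[OF assms]
    by blast
qed

end
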